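(* For any $w\in\{a,\beta\}^*$ such that $\varphi_w$ is primitive, the set $C(w)\cup C(H(w))$ is closed under derivation, where $C(x) = \{\varphi_v : v = \mathrm{cyc}^k(x),\ k\in\mathbb{N}\}$.
   Context: Morphisms on $\{0,1\}^*$: $\varphi_a: 0\mapsto 0, 1 \mapsto 10$; $\varphi_b: 0 \mapsto 0, 1\mapsto 01$; $\varphi_\alpha: 0\mapsto 01, 1\mapsto 1$; $\varphi_\beta: 0\mapsto 10, 1 \mapsto 1$; for $w=w_0\cdots w_{m-1}$, $\varphi_w = \varphi_{w_0}\circ\cdots\circ\varphi_{w_{m-1}}$. $\mathrm{cyc}(u_0u_1\cdots u_{n-1}) = u_1\cdots u_{n-1}u_0$. $H$ is the monoid morphism on $\{a,b,\alpha,\beta\}^*$ with $H(a)=H(b)=b$, $H(\alpha)=\alpha$, $H(\beta)=\beta$. A morphism is primitive if some power maps every letter to a word containing every letter; a substitution is a morphism $\psi$ with a letter $c$, $\psi(c)=cx$, $x$ nonempty, $|\psi^n(c)|\to\infty$. Derived word: for a uniformly recurrent word $\mathbf{u}$ and factor $v$, a return word of $v$ is a factor $r$ such that $rv$ is a factor in which $v$ occurs exactly twice (as prefix and suffix); with $r_0,\dots,r_k$ all return words and $\mathbf{u}=p\,r_{s_0}r_{s_1}\cdots$, $|p|$ the first occurrence of $v$, $\mathbf{d}_{\mathbf{u}}(v)=s_0s_1\cdots$, up to permutation of letters. A finite set $M$ of primitive substitutions is closed under derivation if for every $\varphi\in M$, every fixed point $\mathbf{u}$ of $\varphi$ and every factor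 $v$ of $\mathbf{u}$, $\mathbf{d}_{\mathbf{u}}(v)$ is fixed by some $\psi\in M$. *)

theory Defs
  imports Main "HOL-Library.Infinite_Set"
begin

text \<open>Letters of the binary alphabet are the naturals 0 and 1 (derived words may use
  arbitrary naturals as letters).\<close>

datatype gen = GA | GB | GAl | GBe

definition ext :: "(nat \<Rightarrow> nat list) \<Rightarrow> nat list \<Rightarrow> nat list" where
  "ext \<psi> w = concat (map \<psi> w)"

fun phi :: "gen \<Rightarrow> nat \<Rightarrow> nat list" where
  "phi GA c  = (if c = 0 then [0] else if c = 1 then [1,0] else [c])"
| "phi GB c  = (if c = 0 then [0] else if c = 1 then [0,1] else [c])"
| "phi GAl c = (if c = 0 then [0,1] else if c = 1 then [1] else [c])"
| "phi GBe c = (if c = 0 then [1,0] else if c = 1 then [1] else [c])"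

fun phi_word :: "gen list \<Rightarrow> nat \<Rightarrow> nat list" where
  "phi_word [] = (\<lambda>c. [c])"
| "phi_word (g # w) = (\<lambda>c. ext (phi g) (phi_word w c))"

fun H :: "gen \<Rightarrow> gen" where
  "H GA = GB" | "H GB = GB" | "H GAl = GAl" | "H GBe = GBe"

definition Cset :: "gen list \<Rightarrow> (nat \<Rightarrow> nat list) set" where
  "Cset x = {phi_word (rotate k x) | k. True}"

definition primitive_morph :: "(nat \<Rightarrow> nat list) \<Rightarrow> bool" where
  "primitive_morph \<psi> \<longleftrightarrow>
     (\<exists>n\<ge>1. \<forall>c\<in>{0,1}. \<forall>d\<in>{0,1::nat}. d \<in> set ((ext \<psi> ^^ n) [c]))"

definition substitution :: "(nat \<Rightarrow> nat list) \<Rightarrow> bool" where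
  "substitution \<psi> \<longleftrightarrow>
     (\<exists>c\<in>{0,1::nat}. \<exists>x. x \<noteq> [] \<and> \<psi> c = c # x \<and>
        filterlim (\<lambda>n. length ((ext \<psi> ^^ n) [c])) at_top sequentially)"

definition pref :: "(nat \<Rightarrow> nat) \<Rightarrow> nat \<Rightarrow> nat list" where
  "pref u n = map u [0..<n]"

text \<open>u is an infinite binary word with psi(u) = u (the infinite concatenation
  psi(u0)psi(u1)... equals u).\<close>
definition bin_fixed_point :: "(nat \<Rightarrow> nat list) \<Rightarrow> (nat \<Rightarrow> nat) \<Rightarrow> bool" where
  "bin_fixed_point \<psi> u \<longleftrightarrow>
     (\<forall>n. u n \<in> {0,1}) \<and>
     (\<forall>n. ext \<psi> (pref u n) = pref u (length (ext \<psi> (pref u n)))) \<and>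
     (\<forall>N. \<exists>n. N \<le> length (ext \<psi> (pref u n)))"

definition occurs_at :: "(nat \<Rightarrow> nat) \<Rightarrow> nat list \<Rightarrow> nat \<Rightarrow> bool" where
  "occurs_at u v i \<longleftrightarrow> (\<forall>j<length v. u (i + j) = v ! j)"

definition factor :: "nat list \<Rightarrow> (nat \<Rightarrow> nat) \<Rightarrow> bool" where
  "factor v u \<longleftrightarrow> (\<exists>i. occurs_at u v i)"

text \<open>n-th occurrence of v in u (occurrences listed increasingly), and n-th return word
  r = u[p_n, p_(n+1)). The derived word d_u(v) is the sequence of return words coded by
  letters; being defined up to a permutation of letters, it is represented by the sequence
  ret_seq u v itself, and any injective coding of its values is a representative.\<close>
definition occ_pos :: "(nat \<Rightarrow> nat) \<Rightarrow> nat list \<Rightarrow> nat \<Rightarrow> nat" where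
  "occ_pos u v n = enumerate {i. occurs_at u v i} n"

definition ret_seq :: "(nat \<Rightarrow> nat) \<Rightarrow> nat list \<Rightarrow> nat \<Rightarrow> nat list" where
  "ret_seq u v n = map u [occ_pos u v n..<occ_pos u v (Suc n)]"

definition derived_fixed_by :: "(nat \<Rightarrow> nat) \<Rightarrow> nat list \<Rightarrow> (nat \<Rightarrow> nat list) \<Rightarrow> bool" where
  "derived_fixed_by u v \<psi> \<longleftrightarrow>
     (\<exists>\<pi> :: nat list \<Rightarrow> nat. inj_on \<pi> (range (ret_seq u v)) \<and>
        bin_fixed_point \<psi> (\<pi> \<circ> ret_seq u v))"

definition closed_under_derivation :: "(nat \<Rightarrow> nat list) set \<Rightarrow> bool" where
  "closed_under_derivation M \<longleftrightarrow>
     finite M \<and> (\<forall>\<phi>\<in>M. primitive_morph \<phi> \<and> substitution \<phi>) \<and>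
     (\<forall>\<phi>\<in>M. \<forall>u. bin_fixed_point \<phi> u \<longrightarrow>
        (\<forall>v. factor v u \<longrightarrow> (\<exists>\<psi>\<in>M. derived_fixed_by u v \<psi>)))"

end

theory Submission
  imports Defs
begin

text \<open>
  Every morphism \<open>\<phi>\<^sub>g\<close> involved is elementary up to a shift: \<open>\<phi>\<^sub>b\<close> and
  \<open>\<phi>\<^sub>\<beta>\<close> send one letter \<open>d\<close> to \<open>d\<close> and the other letter \<open>e\<close> to \<open>d e\<close>, and
  \<open>\<phi>\<^sub>a(x)\<close> is \<open>\<phi>\<^sub>b(x)\<close> without its first letter. If \<open>x\<close> is fixed by \<open>\<phi>\<^sub>s\<close> with
  \<open>s = g s'\<close>, then \<open>x = \<phi>\<^sub>g(x')\<close> where \<open>x' = \<phi>\<^bsub>s'\<^esub>(x)\<close> is fixed by the rotated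
  morphism \<open>\<phi>\<^bsub>s' g\<^esub>\<close>.

  For an elementary morphism, a factor \<open>v\<close> of \<open>\<phi>(x')\<close> beginning with \<open>d\<close> parses
  uniquely into the blocks \<open>d\<close> and \<open>d e\<close>. This yields a factor \<open>v'\<close> of \<open>x'\<close> whose
  occurrences correspond to those of \<open>v\<close> and whose return words are mapped by \<open>\<phi>\<close>
  (injectively) onto those of \<open>v\<close>, so \<open>v\<close> and \<open>v'\<close> have the same derived sequence; a
  factor beginning with \<open>e\<close> is first extended by \<open>d\<close> on the left. As \<open>v'\<close> is shorter
  than \<open>v\<close> unless \<open>v = e\<close>, induction reaches the empty factor, whose derived sequence is
  the fixed point itself, a fixed point of some rotation of \<open>w\<close> or \<open>H(w)\<close>.

  The shift in \<open>\<phi>\<^sub>a\<close> may remove the first return word. The derived sequence is then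
  the shift of a fixed point of \<open>\<phi>\<^sub>u\<close>, \<open>u\<close> a rotation of \<open>w\<close>, which begins with
  \<open>1\<close>; and this shift is a fixed point of \<open>\<phi>\<^bsub>H(u)\<^esub>\<close>. This is where
  \<open>C(H(w))\<close> comes in.
\<close>

section \<open>Images of infinite words under morphisms\<close>

lemma ext_Nil [simp]: "ext f [] = []"
  by (simp add: ext_def)

lemma ext_Cons [simp]: "ext f (c # w) = f c @ ext f w"
  by (simp add: ext_def)

lemma ext_append [simp]: "ext f (u @ v) = ext f u @ ext f v"
  by (simp add: ext_def)

lemma ext_ext: "ext f (ext g w) = ext (\<lambda>c. ext f (g c)) w"
  by (induction w) auto

lemma ext_singleton [simp]: "ext (\<lambda>c. [c]) w = w"
  by (induction w) auto

lemma pref_0 [simp]: "pref x 0 = []"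
  by (simp add: pref_def)

lemma pref_Suc: "pref x (Suc n) = pref x n @ [x n]"
  by (simp add: pref_def)

lemma length_pref [simp]: "length (pref x n) = n"
  by (simp add: pref_def)

lemma nth_pref [simp]: "j < n \<Longrightarrow> pref x n ! j = x j"
  by (simp add: pref_def)

lemma upt_split: "i \<le> j \<Longrightarrow> j \<le> k \<Longrightarrow> [i..<k] = [i..<j] @ [j..<k]"
  using upt_add_eq_append[of i j "k - j"] by simp

lemma pref_split: "m \<le> n \<Longrightarrow> pref x n = pref x m @ map x [m..<n]"
  by (simp add: pref_def upt_split[of 0 m n])

lemma pref_Suc_shift: "pref z (Suc m) = z 0 # pref (\<lambda>j. z (Suc j)) m"
  unfolding pref_def
  by (simp only: upt_conv_Cons[OF zero_less_Suc] map_Suc_upt[symmetric] list.map map_map comp_def)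

definition nonerasing :: "(nat \<Rightarrow> nat list) \<Rightarrow> bool" where
  "nonerasing f \<longleftrightarrow> (\<forall>c. f c \<noteq> [])"

lemma length_le_length_ext: "nonerasing f \<Longrightarrow> length w \<le> length (ext f w)"
proof (induction w)
  case (Cons c w)
  then have "f c \<noteq> []" by (simp add: nonerasing_def)
  with Cons show ?case by (cases "f c") auto
qed simp

lemma nonerasing_comp: "nonerasing f \<Longrightarrow> nonerasing g \<Longrightarrow> nonerasing (\<lambda>c. ext f (g c))"
  unfolding nonerasing_def by (metis ext_Cons Nil_is_append_conv neq_Nil_conv)

lemma hd_ext: "nonerasing f \<Longrightarrow> xs \<noteq> [] \<Longrightarrow> hd (ext f xs) = hd (f (hd xs))"
  by (cases xs) (auto simp: nonerasing_def)

definition binary_word :: "(nat \<Rightarrow> nat) \<Rightarrow> bool" where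
  "binary_word x \<longleftrightarrow> (\<forall>n. x n \<in> {0,1})"

lemma set_pref_binary: "binary_word x \<Longrightarrow> set (pref x m) \<subseteq> {0,1}"
  unfolding binary_word_def pref_def by (simp add: image_subset_iff)

lemma set_ext_binary:
  "set xs \<subseteq> {0,1} \<Longrightarrow> \<forall>c\<in>{0,1}. set (f c) \<subseteq> {0,1} \<Longrightarrow> set (ext f xs) \<subseteq> {0,1::nat}"
  by (induction xs) auto

text \<open>For erasing morphisms the index may fall outside the list and the value is junk, so
  all lemmas about \<open>morph_image\<close> assume \<open>nonerasing\<close>.\<close>

definition morph_image :: "(nat \<Rightarrow> nat list) \<Rightarrow> (nat \<Rightarrow> nat) \<Rightarrow> nat \<Rightarrow> nat" where
  "morph_image f x j = ext f (pref x (Suc j)) ! j"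

definition block_start :: "(nat \<Rightarrow> nat list) \<Rightarrow> (nat \<Rightarrow> nat) \<Rightarrow> nat \<Rightarrow> nat" where
  "block_start f x k = length (ext f (pref x k))"

lemma block_start_0: "block_start f x 0 = 0"
  by (simp add: block_start_def)

definition prefix_of :: "nat list \<Rightarrow> (nat \<Rightarrow> nat) \<Rightarrow> bool" where
  "prefix_of xs z \<longleftrightarrow> (\<forall>j<length xs. xs ! j = z j)"

lemma prefix_of_Cons: "prefix_of (c # xs) z \<Longrightarrow> prefix_of xs (\<lambda>j. z (Suc j))"
  by (auto simp: prefix_of_def)

lemma prefix_of_appendD: "prefix_of (xs @ ys) z \<Longrightarrow> prefix_of xs z"
  unfolding prefix_of_def by (metis length_append nth_append trans_less_add1)

context
  fixes f :: "nat \<Rightarrow> nat list"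
  assumes nonerasing: "nonerasing f"
begin

lemma morph_image_nth:
  assumes "j < length (ext f (pref x n))"
  shows "morph_image f x j = ext f (pref x n) ! j"
proof (cases "n \<le> Suc j")
  case True
  then show ?thesis
    using assms by (simp add: morph_image_def pref_split[of n "Suc j"] nth_append)
next
  case False
  have "Suc j \<le> length (ext f (pref x (Suc j)))"
    using length_le_length_ext[OF nonerasing, of "pref x (Suc j)"] by simp
  then show ?thesis
    using False by (simp add: morph_image_def pref_split[of "Suc j" n] nth_append)
qed

lemma prefix_of_morph_image: "prefix_of (ext f (pref x n)) (morph_image f x)"
  unfolding prefix_of_def using morph_image_nth by metis

lemma morph_image_eqI:
  assumes "\<And>m. prefix_of (ext f (pref x m)) z"
  shows "morph_image f x = z"
proof
  fix j
  have "Suc j \<le> length (ext f (pref x (Suc j)))"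
    using length_le_length_ext[OF nonerasing, of "pref x (Suc j)"] by simp
  then show "morph_image f x j = z j"
    using assms[of "Suc j"] by (simp add: morph_image_def prefix_of_def)
qed

lemma pref_morph_image: "pref (morph_image f x) (block_start f x m) = ext f (pref x m)"
  by (rule nth_equalityI) (simp_all add: block_start_def morph_image_nth)

lemma block_start_Suc: "block_start f x (Suc k) = block_start f x k + length (f (x k))"
  by (simp add: block_start_def pref_Suc)

lemma strict_mono_block_start: "strict_mono (block_start f x)"
  unfolding strict_mono_Suc_iff block_start_Suc
  using nonerasing by (simp add: nonerasing_def)

lemma block_start_eq_0_iff [simp]: "block_start f x k = 0 \<longleftrightarrow> k = 0"
  using strict_mono_less[OF strict_mono_block_start[of x], of 0 k] by (auto simp: block_start_0)

lemma morph_image_block: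
  assumes "i < length (f (x k))"
  shows "morph_image f x (block_start f x k + i) = f (x k) ! i"
  using morph_image_nth[of "block_start f x k + i" x "Suc k"] assms
  by (simp add: block_start_def pref_Suc nth_append)

lemma morph_image_0: "morph_image f x 0 = hd (f (x 0))"
  using morph_image_block[of 0 x 0] nonerasing
  by (cases "f (x 0)") (auto simp: nonerasing_def block_start_def)

lemma in_block:
  obtains k i where "j = block_start f x k + i" and "i < length (f (x k))"
proof (induction j arbitrary: thesis)
  case 0
  have "f (x 0) \<noteq> []"
    using nonerasing by (simp add: nonerasing_def)
  then show ?case
    using "0"[of 0 0] by (simp add: block_start_0)
next
  case (Suc j)
  then obtain k i where ki: "j = block_start f x k + i" "i < length (f (x k))" by blast
  show ?case
  proof (cases "Suc i < length (f (x k))")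
    case True
    then show ?thesis using ki Suc.prems[of k "Suc i"] by simp
  next
    case False
    have "f (x (Suc k)) \<noteq> []" using nonerasing by (simp add: nonerasing_def)
    then show ?thesis
      using ki False Suc.prems[of "Suc k" 0] by (simp add: block_start_Suc)
  qed
qed

lemma map_morph_image_block_start:
  "a \<le> b \<Longrightarrow> map (morph_image f x) [block_start f x a..<block_start f x b] = ext f (map x [a..<b])"
proof (induction b)
  case (Suc b)
  show ?case
  proof (cases "a = Suc b")
    case False
    then have ab: "a \<le> b" using Suc.prems by simp
    have m: "block_start f x a \<le> block_start f x b"
      using strict_mono_block_start ab by (simp add: strict_mono_less_eq)
    have "[block_start f x a..<block_start f x (Suc b)]
        = [block_start f x a..<block_start f x b] @ [block_start f x b..<block_start f x (Suc b)]"
      using m by (intro upt_split) (simp_all add: block_start_Suc)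
    moreover have "map (morph_image f x) [block_start f x b..<block_start f x (Suc b)] = f (x b)"
      by (rule nth_equalityI) (auto simp: block_start_Suc morph_image_block)
    ultimately show ?thesis
      using Suc.IH[OF ab] ab by simp
  qed simp
qed simp

lemma bin_fixed_point_iff: "bin_fixed_point f u \<longleftrightarrow> binary_word u \<and> morph_image f u = u"
proof
  assume fp: "bin_fixed_point f u"
  have "prefix_of (ext f (pref u m)) u" for m
    using fp unfolding bin_fixed_point_def prefix_of_def by (metis nth_pref)
  then show "binary_word u \<and> morph_image f u = u"
    using fp morph_image_eqI by (simp add: bin_fixed_point_def binary_word_def)
next
  assume "binary_word u \<and> morph_image f u = u"
  moreover have "\<exists>n. N \<le> length (ext f (pref u n))" for N
    using length_le_length_ext[OF nonerasing, of "pref u N"] by auto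
  ultimately show "bin_fixed_point f u"
    using pref_morph_image[of u]
    by (auto simp: bin_fixed_point_def binary_word_def block_start_def)
qed

end

lemma binary_morph_image:
  assumes "nonerasing f" "\<forall>c\<in>{0,1}. set (f c) \<subseteq> {0,1}" "binary_word x"
  shows "binary_word (morph_image f x)"
  unfolding binary_word_def
proof
  fix j
  have "Suc j \<le> length (ext f (pref x (Suc j)))"
    using length_le_length_ext[OF assms(1), of "pref x (Suc j)"] by simp
  then have "morph_image f x j \<in> set (ext f (pref x (Suc j)))"
    unfolding morph_image_def by simp
  then show "morph_image f x j \<in> {0,1}"
    using set_ext_binary[OF set_pref_binary[OF assms(3)] assms(2)] by blast
qed

lemma morph_image_comp:
  assumes "nonerasing f" "nonerasing g"
  shows "morph_image (\<lambda>c. ext f (g c)) x = morph_image f (morph_image g x)"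
proof (rule morph_image_eqI[OF nonerasing_comp[OF assms]])
  fix m
  have "ext (\<lambda>c. ext f (g c)) (pref x m) = ext f (pref (morph_image g x) (block_start g x m))"
    by (simp add: ext_ext pref_morph_image assms(2))
  then show "prefix_of (ext (\<lambda>c. ext f (g c)) (pref x m)) (morph_image f (morph_image g x))"
    using prefix_of_morph_image[OF assms(1)] by simp
qed

lemma morph_image_id: "morph_image (\<lambda>c. [c]) x = x"
  by (rule morph_image_eqI) (auto simp: nonerasing_def prefix_of_def)

section \<open>The morphisms \<open>\<phi>\<^sub>w\<close>\<close>

lemma phi_word_append: "phi_word (v @ w) c = ext (phi_word v) (phi_word w c)"
  by (induction v arbitrary: c) (auto simp: ext_ext)

lemma nonerasing_phi: "nonerasing (phi g)"
  by (cases g) (auto simp: nonerasing_def)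

lemma nonerasing_phi_word: "nonerasing (phi_word w)"
proof (induction w)
  case (Cons g w)
  then show ?case using nonerasing_comp[OF nonerasing_phi] by simp
qed (simp add: nonerasing_def)

lemma phi_word_ne_Nil [simp]: "phi_word w c \<noteq> []"
  using nonerasing_phi_word by (simp add: nonerasing_def)

lemma morph_image_phi_word_Cons:
  "morph_image (phi_word (g # w)) x = morph_image (phi g) (morph_image (phi_word w) x)"
  using morph_image_comp[OF nonerasing_phi nonerasing_phi_word] by simp

lemma morph_image_phi_word_snoc:
  "morph_image (phi_word (w @ [g])) x = morph_image (phi_word w) (morph_image (phi g) x)"
proof -
  have "phi_word (w @ [g]) = (\<lambda>c. ext (phi_word w) (phi g c))"
    by (rule ext) (simp add: phi_word_append ext_def)
  then show ?thesis using morph_image_comp[OF nonerasing_phi_word nonerasing_phi] by simp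
qed

lemma set_phi_word_binary: "c \<in> {0,1} \<Longrightarrow> set (phi_word w c) \<subseteq> {0,1}"
proof (induction w)
  case (Cons g w)
  have "\<forall>c\<in>{0,1}. set (phi g c) \<subseteq> {0,1}" by (cases g) auto
  with Cons show ?case using set_ext_binary by simp
qed simp

lemma binary_morph_image_phi_word: "binary_word x \<Longrightarrow> binary_word (morph_image (phi_word w) x)"
  using binary_morph_image[OF nonerasing_phi_word] set_phi_word_binary by blast

lemma hd_phi_word_binary: "c \<in> {0,1} \<Longrightarrow> hd (phi_word w c) \<in> {0,1}"
  by (rule subsetD[OF set_phi_word_binary hd_in_set[OF phi_word_ne_Nil]])

lemma hd_phi_word:
  assumes "set w \<subseteq> {GA, GBe}" "GBe \<in> set w" "c \<in> {0,1}"
  shows "hd (phi_word w c) = 1"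
  using assms
proof (induction w)
  case (Cons g w)
  then show ?case
    using hd_phi_word_binary[OF Cons.prems(3), of w] by (auto simp: hd_ext[OF nonerasing_phi])
qed simp

lemma fixed_point_starts_with_1:
  assumes "set w \<subseteq> {GA, GBe}" "GBe \<in> set w" "binary_word x" "morph_image (phi_word w) x = x"
  shows "x 0 = 1"
  using morph_image_0[OF nonerasing_phi_word, of w x] hd_phi_word[OF assms(1,2)] assms(3,4)
  by (simp add: binary_word_def)

lemma ext_phi_GB: "set w \<subseteq> {0,1} \<Longrightarrow> ext (phi GB) w @ [0] = 0 # ext (phi GA) w"
  by (induction w) auto

lemma morph_image_phi_GB:
  assumes "binary_word x"
  shows "morph_image (phi GB) x 0 = 0"
    and "morph_image (phi GA) x = (\<lambda>j. morph_image (phi GB) x (Suc j))"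
proof -
  show "morph_image (phi GB) x 0 = 0"
    using assms by (auto simp: morph_image_0[OF nonerasing_phi] binary_word_def)
  show "morph_image (phi GA) x = (\<lambda>j. morph_image (phi GB) x (Suc j))"
  proof (rule morph_image_eqI[OF nonerasing_phi])
    fix m
    have "x m \<in> {0,1}" using assms by (simp add: binary_word_def)
    then obtain t where t: "phi GB (x m) = 0 # t" by auto
    have "ext (phi GB) (pref x (Suc m)) = (ext (phi GB) (pref x m) @ [0]) @ t"
      by (simp add: pref_Suc t del: phi.simps)
    also have "\<dots> = (0 # ext (phi GA) (pref x m)) @ t"
      using ext_phi_GB[OF set_pref_binary[OF assms]] by simp
    finally show "prefix_of (ext (phi GA) (pref x m)) (\<lambda>j. morph_image (phi GB) x (Suc j))"
      using prefix_of_morph_image[OF nonerasing_phi, of GB x "Suc m"]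
      by (metis append_Cons prefix_of_Cons prefix_of_appendD)
  qed
qed

lemma morph_image_phi_shift:
  assumes "binary_word z" "z 0 = 1" "g \<in> {GA, GBe}"
  shows "morph_image (phi (H g)) (\<lambda>j. z (Suc j)) = (\<lambda>j. morph_image (phi g) z (Suc j))"
    and "morph_image (phi g) z 0 = 1"
proof -
  show "morph_image (phi g) z 0 = 1"
    using assms by (auto simp: morph_image_0[OF nonerasing_phi])
  show "morph_image (phi (H g)) (\<lambda>j. z (Suc j)) = (\<lambda>j. morph_image (phi g) z (Suc j))"
  proof (rule morph_image_eqI[OF nonerasing_phi])
    fix m
    have img: "prefix_of (ext (phi g) (pref z (Suc m))) (morph_image (phi g) z)"
      by (rule prefix_of_morph_image[OF nonerasing_phi])
    have binary_tail: "set (pref (\<lambda>j. z (Suc j)) m) \<subseteq> {0,1}"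
      using assms(1) by (simp add: binary_word_def pref_def image_subset_iff)
    show "prefix_of (ext (phi (H g)) (pref (\<lambda>j. z (Suc j)) m)) (\<lambda>j. morph_image (phi g) z (Suc j))"
    proof (cases "g = GA")
      case True
      have "ext (phi g) (pref z (Suc m)) = 1 # (ext (phi GB) (pref (\<lambda>j. z (Suc j)) m) @ [0])"
        using True assms(2) ext_phi_GB[OF binary_tail] by (simp add: pref_Suc_shift)
      then show ?thesis using img True by (metis H.simps(1) prefix_of_Cons prefix_of_appendD)
    next
      case False
      then have "g = GBe" using assms(3) by simp
      then have "ext (phi g) (pref z (Suc m)) = 1 # ext (phi GBe) (pref (\<lambda>j. z (Suc j)) m)"
        using assms(2) by (simp add: pref_Suc_shift)
      then show ?thesis using img \<open>g = GBe\<close> by (metis H.simps(4) prefix_of_Cons)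
    qed
  qed
qed

lemma morph_image_phi_word_shift:
  assumes "set w \<subseteq> {GA, GBe}" "binary_word z" "z 0 = 1"
  shows "morph_image (phi_word (map H w)) (\<lambda>j. z (Suc j)) = (\<lambda>j. morph_image (phi_word w) z (Suc j))
    \<and> morph_image (phi_word w) z 0 = 1"
  using assms(1)
proof (induction w)
  case Nil
  then show ?case using assms(3) by (simp add: morph_image_id)
next
  case (Cons g w)
  let ?z' = "morph_image (phi_word w) z"
  have IH: "morph_image (phi_word (map H w)) (\<lambda>j. z (Suc j)) = (\<lambda>j. ?z' (Suc j))" "?z' 0 = 1"
    using Cons by auto
  have "binary_word ?z'" using binary_morph_image_phi_word[OF assms(2)] .
  moreover have "g \<in> {GA, GBe}" using Cons.prems by simp
  ultimately show ?case
    using morph_image_phi_shift[of ?z' g] IH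
    by (simp add: morph_image_phi_word_Cons del: phi_word.simps)
qed

lemma shift_fixed_point_H:
  assumes "set w \<subseteq> {GA, GBe}" "binary_word z" "z 0 = 1" "morph_image (phi_word w) z = z"
  shows "morph_image (phi_word (map H w)) (\<lambda>j. z (Suc j)) = (\<lambda>j. z (Suc j))"
  using morph_image_phi_word_shift[OF assms(1-3)] assms(4) by simp

section \<open>Occurrences, return words and derived sequences\<close>

definition occurrences :: "(nat \<Rightarrow> nat) \<Rightarrow> nat list \<Rightarrow> nat set" where
  "occurrences x v = {i. occurs_at x v i}"

lemma occurs_at_Nil [simp]: "occurs_at x [] i"
  by (simp add: occurs_at_def)

lemma occurs_at_Cons: "occurs_at x (c # v) i \<longleftrightarrow> x i = c \<and> occurs_at x v (Suc i)"
  unfolding occurs_at_def by (auto simp: less_Suc_eq_0_disj)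

lemma occurrences_Nil [simp]: "occurrences x [] = UNIV"
  by (simp add: occurrences_def occurs_at_def)

lemma factor_iff_occurrences: "factor v x \<longleftrightarrow> occurrences x v \<noteq> {}"
  by (simp add: factor_def occurrences_def)

lemma Least_range_strict_mono: "strict_mono (r :: nat \<Rightarrow> nat) \<Longrightarrow> (LEAST n. n \<in> range r) = r 0"
  by (rule Least_equality) (auto simp: strict_mono_less_eq)

lemma enumerate_range: "strict_mono (r :: nat \<Rightarrow> nat) \<Longrightarrow> enumerate (range r) n = r n"
proof (induction n arbitrary: r)
  case 0
  then show ?case by (simp add: enumerate_0 Least_range_strict_mono)
next
  case (Suc n)
  have "range r - {r 0} = range (\<lambda>m. r (Suc m))"
    using strict_mono_eq[OF Suc.prems] by (auto simp: image_iff) (metis not0_implies_Suc)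
  moreover have "strict_mono (\<lambda>m. r (Suc m))"
    using Suc.prems by (simp add: strict_mono_def)
  ultimately show ?case
    using Suc.IH Suc.prems by (simp add: enumerate_Suc Least_range_strict_mono)
qed

lemma enumerate_image:
  assumes "strict_mono (g :: nat \<Rightarrow> nat)" "infinite S"
  shows "enumerate (g ` S) n = g (enumerate S n)"
proof -
  have "g ` S = range (g \<circ> enumerate S)"
    by (simp only: image_comp[symmetric] range_enumerate[OF assms(2)])
  moreover have "strict_mono (g \<circ> enumerate S)"
    using assms strict_mono_enumerate by (auto simp: strict_mono_def)
  ultimately show ?thesis by (metis comp_apply enumerate_range)
qed

lemma ret_seq_occurrences:
  "ret_seq x v n = map x [enumerate (occurrences x v) n..<enumerate (occurrences x v) (Suc n)]"
  by (simp add: ret_seq_def occ_pos_def occurrences_def)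

lemma set_ret_seq_binary: "binary_word x \<Longrightarrow> set (ret_seq x v n) \<subseteq> {0,1}"
  unfolding ret_seq_def binary_word_def by (simp add: image_subset_iff)

lemma ret_seq_Nil: "ret_seq x [] n = [x n]"
  using enumerate_range[of id] by (simp add: ret_seq_occurrences strict_mono_def)

lemma ret_seq_morph_image:
  assumes "nonerasing f"
    and occ: "occurrences (morph_image f x) u = block_start f x ` occurrences x u'"
    and inf: "infinite (occurrences x u')"
  shows "ret_seq (morph_image f x) u n = ext f (ret_seq x u' n)"
  using map_morph_image_block_start[OF assms(1)] enumerate_step[OF inf, of n]
  by (simp add: ret_seq_occurrences occ
      enumerate_image[OF strict_mono_block_start[OF assms(1)] inf])

lemma map_upt_Suc_shift: "map y [Suc a..<Suc b] = map (\<lambda>j. y (Suc j)) [a..<b]"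
  by (simp only: map_Suc_upt[symmetric] map_map comp_def)

lemma ret_seq_shift:
  assumes occ: "occurrences y v = Suc ` occurrences x v" and inf: "infinite (occurrences x v)"
    and "x = (\<lambda>j. y (Suc j))"
  shows "ret_seq y v n = ret_seq x v n"
  using map_upt_Suc_shift[of y] enumerate_image[of Suc, OF _ inf] assms(3)
  by (simp add: ret_seq_occurrences occ strict_mono_Suc_iff)

lemma ret_seq_shift_drop_first:
  assumes occ: "occurrences y v = insert 0 (Suc ` occurrences x v)"
    and inf: "infinite (occurrences x v)"
    and "x = (\<lambda>j. y (Suc j))"
  shows "ret_seq x v n = ret_seq y v (Suc n)"
proof -
  have "enumerate (occurrences y v) 0 = 0"
    using occ by (simp add: enumerate_0)
  moreover have "occurrences y v - {0} = Suc ` occurrences x v"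
    using occ by auto
  ultimately have "enumerate (occurrences y v) (Suc m) = Suc (enumerate (occurrences x v) m)" for m
    using enumerate_image[of Suc, OF _ inf] by (simp add: enumerate_Suc' strict_mono_Suc_iff)
  then show ?thesis
    using map_upt_Suc_shift[of y] assms(3) by (simp add: ret_seq_occurrences)
qed

lemma ret_seq_extend_left:
  assumes occ: "occurrences y v = Suc ` occurrences y (c # v)"
    and inf: "infinite (occurrences y (c # v))"
  shows "ret_seq y (c # v) n = c # tl (ret_seq y (c # v) n)"
    and "ret_seq y v n = tl (ret_seq y (c # v) n) @ [c]"
proof -
  let ?p = "enumerate (occurrences y (c # v))"
  have p: "y (?p m) = c" for m
    using enumerate_in_set[OF inf, of m] by (simp add: occurrences_def occurs_at_Cons)
  have less: "?p n < ?p (Suc n)"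
    using enumerate_step[OF inf] .
  then have upt: "[?p n..<?p (Suc n)] = ?p n # [Suc (?p n)..<?p (Suc n)]"
    using upt_conv_Cons by blast
  then show "ret_seq y (c # v) n = c # tl (ret_seq y (c # v) n)"
    by (simp add: ret_seq_occurrences p)
  have "enumerate (occurrences y v) m = Suc (?p m)" for m
    using enumerate_image[of Suc, OF _ inf] occ by (simp add: strict_mono_Suc_iff)
  then show "ret_seq y v n = tl (ret_seq y (c # v) n) @ [c]"
    using less by (simp add: ret_seq_occurrences upt p)
qed

text \<open>Since derived sequences are only defined up to a renaming of letters, a coding of the
  derived sequence is any sequence with the same equalities between positions.\<close>

definition derived_coding :: "(nat \<Rightarrow> nat) \<Rightarrow> nat list \<Rightarrow> (nat \<Rightarrow> nat) \<Rightarrow> bool" where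
  "derived_coding x v z \<longleftrightarrow> (\<forall>m n. ret_seq x v m = ret_seq x v n \<longleftrightarrow> z m = z n)"

lemma ex_inj_on_range_comp_iff:
  "(\<exists>\<pi>. inj_on \<pi> (range r) \<and> \<pi> \<circ> r = z) \<longleftrightarrow> (\<forall>m n. r m = r n \<longleftrightarrow> z m = z n)"
proof
  assume "\<exists>\<pi>. inj_on \<pi> (range r) \<and> \<pi> \<circ> r = z"
  then show "\<forall>m n. r m = r n \<longleftrightarrow> z m = z n"
    by (metis comp_apply inj_on_eq_iff rangeI)
next
  assume kernel: "\<forall>m n. r m = r n \<longleftrightarrow> z m = z n"
  define \<pi> where "\<pi> a = z (inv r a)" for a
  have "\<pi> (r n) = z n" for n
    using kernel f_inv_into_f[of "r n" r UNIV] by (simp add: \<pi>_def)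
  then have "inj_on \<pi> (range r) \<and> \<pi> \<circ> r = z"
    using kernel by (auto simp: inj_on_def)
  then show "\<exists>\<pi>. inj_on \<pi> (range r) \<and> \<pi> \<circ> r = z" by blast
qed

lemma derived_fixed_by_iff:
  "derived_fixed_by x v \<psi> \<longleftrightarrow> (\<exists>z. derived_coding x v z \<and> bin_fixed_point \<psi> z)"
  unfolding derived_fixed_by_def derived_coding_def ex_inj_on_range_comp_iff[symmetric] by blast

lemma derived_coding_transfer:
  assumes "\<And>n. ret_seq x v n = F (ret_seq x' v' n)" "inj_on F (range (ret_seq x' v'))"
  shows "derived_coding x v z \<longleftrightarrow> derived_coding x' v' z"
  using assms by (simp add: derived_coding_def inj_on_eq_iff)

lemma derived_coding_Nil: "derived_coding x [] x"
  by (simp add: derived_coding_def ret_seq_Nil)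

definition derived_in :: "(nat \<Rightarrow> nat list) set \<Rightarrow> (nat \<Rightarrow> nat) \<Rightarrow> nat list \<Rightarrow> bool" where
  "derived_in M x v \<longleftrightarrow> infinite (occurrences x v) \<and> (\<exists>\<psi>\<in>M. derived_fixed_by x v \<psi>)"

lemma derived_in_mono: "M \<subseteq> M' \<Longrightarrow> derived_in M x v \<Longrightarrow> derived_in M' x v"
  unfolding derived_in_def by blast

lemma derived_in_transfer:
  assumes occ: "occurrences y v = g ` occurrences x v'" and "inj g"
    and ret: "\<And>n. infinite (occurrences x v') \<Longrightarrow> ret_seq y v n = F (ret_seq x v' n)"
    and inj: "infinite (occurrences x v') \<Longrightarrow> inj_on F (range (ret_seq x v'))"
  shows "derived_in M y v \<longleftrightarrow> derived_in M x v'"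
proof -
  have inf: "infinite (occurrences y v) \<longleftrightarrow> infinite (occurrences x v')"
    unfolding occ using finite_image_iff[OF inj_on_subset[OF \<open>inj g\<close> subset_UNIV]] by blast
  show ?thesis
  proof (cases "infinite (occurrences x v')")
    case True
    then have "derived_coding y v z \<longleftrightarrow> derived_coding x v' z" for z
      using derived_coding_transfer[OF ret inj] by blast
    then show ?thesis
      using inf by (simp add: derived_in_def derived_fixed_by_iff)
  next
    case False
    then show ?thesis
      using inf by (simp add: derived_in_def)
  qed
qed

lemma derived_in_extend_left:
  assumes occ: "occurrences y v = Suc ` occurrences y (c # v)"
  shows "derived_in M y v \<longleftrightarrow> derived_in M y (c # v)"
proof (rule derived_in_transfer[OF occ inj_Suc])
  fix n assume inf: "infinite (occurrences y (c # v))"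
  show "ret_seq y v n = tl (ret_seq y (c # v) n) @ [c]"
    using ret_seq_extend_left(2)[OF occ inf] .
  show "inj_on (\<lambda>r. tl r @ [c]) (range (ret_seq y (c # v)))"
    using ret_seq_extend_left(1)[OF occ inf] by (auto simp: inj_on_def) (metis list.sel(3))
qed

lemma derived_in_shift:
  assumes "x = (\<lambda>j. y (Suc j))" "\<not> occurs_at y v 0"
  shows "derived_in M y v \<longleftrightarrow> derived_in M x v"
proof -
  have occ: "occurrences y v = Suc ` occurrences x v"
  proof (intro equalityI subsetI)
    fix i assume i: "i \<in> occurrences y v"
    then obtain i' where "i = Suc i'"
      using assms(2) by (cases i) (auto simp: occurrences_def)
    then show "i \<in> Suc ` occurrences x v"
      using i assms(1) by (auto simp: occurrences_def occurs_at_def)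
  qed (use assms(1) in \<open>auto simp: occurrences_def occurs_at_def\<close>)
  show ?thesis
    by (rule derived_in_transfer[OF occ inj_Suc, where F = id])
      (simp_all add: ret_seq_shift[OF occ _ assms(1)])
qed

section \<open>Elementary morphisms and desubstitution\<close>

text \<open>On the letters \<open>0, 1\<close> these are \<open>\<phi>\<^sub>b\<close> (\<open>d = 0\<close>, \<open>e = 1\<close>) and
  \<open>\<phi>\<^sub>\<beta>\<close> (\<open>d = 1\<close>, \<open>e = 0\<close>).\<close>

locale elementary_morphism =
  fixes f :: "nat \<Rightarrow> nat list" and d e :: nat
  assumes f_letters: "\<forall>c\<in>{0,1}. f c = (if c = e then [d, e] else [d])"
    and letters: "(d = 0 \<and> e = 1) \<or> (d = 1 \<and> e = 0)"
    and nonerasing: "nonerasing f"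
begin

lemma d_neq_e: "d \<noteq> e"
  using letters by auto

lemma binary_letter: "c \<in> {0,1} \<Longrightarrow> c \<noteq> e \<Longrightarrow> c = d"
  using letters by auto

lemma f_e: "f e = [d, e]"
  using f_letters letters by auto

text \<open>Reads a word beginning with \<open>d\<close> as a product of the blocks \<open>d = f d\<close> and
  \<open>d e = f e\<close>; the last letter is dropped, as it may begin either block.\<close>

fun parse_blocks :: "nat list \<Rightarrow> nat list" where
  "parse_blocks (c # c' # u) = (if c' = e then e # parse_blocks u else d # parse_blocks (c' # u))"
| "parse_blocks u = []"

lemma length_parse_blocks: "length (parse_blocks u) \<le> length u - 1"
  by (induction u rule: parse_blocks.induct) auto

lemma parse_blocks_ext: "set w \<subseteq> {0,1} \<Longrightarrow> parse_blocks (ext f w @ [d]) = w"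
proof (induction w)
  case (Cons c w)
  have "hd (ext f w @ [d]) = d"
    using Cons.prems f_letters by (cases w) auto
  then obtain t where t: "ext f w @ [d] = d # t"
    by (cases "ext f w @ [d]") auto
  show ?case
  proof (cases "c = e")
    case True
    then have "ext f (c # w) @ [d] = d # e # (ext f w @ [d])"
      by (simp add: f_e)
    then show ?thesis using Cons True by simp
  next
    case False
    then have "c = d" "ext f (c # w) @ [d] = d # d # t"
      using Cons.prems f_letters binary_letter[of c] t by auto
    then show ?thesis using Cons t d_neq_e by simp
  qed
qed simp

lemma inj_on_ext: "inj_on (ext f) {w. set w \<subseteq> {0,1}}"
  by (rule inj_onI) (metis mem_Collect_eq parse_blocks_ext)

end

locale elementary_image = elementary_morphism +
  fixes x :: "nat \<Rightarrow> nat"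
  assumes binary: "binary_word x"
begin

lemma f_x: "f (x k) = (if x k = e then [d, e] else [d])"
  using f_letters binary unfolding binary_word_def by blast

lemma x_neq_e: "x k \<noteq> e \<Longrightarrow> x k = d"
  using binary letters unfolding binary_word_def by (metis empty_iff insert_iff)

lemma binary_image: "binary_word (morph_image f x)"
  using binary_morph_image[OF nonerasing _ binary] f_letters letters by auto

lemma block_start_Suc_eq: "block_start f x (Suc k) = block_start f x k + (if x k = e then 2 else 1)"
  using f_x[of k] by (simp add: block_start_Suc[OF nonerasing])

lemma image_block_start: "morph_image f x (block_start f x k) = d"
  using morph_image_block[OF nonerasing, of 0 x k] f_x[of k] by (simp split: if_splits)

lemma image_after_block_start:
  "morph_image f x (Suc (block_start f x k)) = (if x k = e then e else d)"
  using morph_image_block[OF nonerasing, of 1 x k] f_x[of k]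
    image_block_start[of "Suc k"] block_start_Suc_eq[of k]
  by (simp split: if_splits)

lemma image_eq_d_imp_block_start:
  assumes "morph_image f x j = d"
  obtains k where "j = block_start f x k"
proof -
  obtain k i where ki: "j = block_start f x k + i" "i < length (f (x k))"
    using in_block[OF nonerasing] by blast
  have "i = 0"
  proof (rule ccontr)
    assume "i \<noteq> 0"
    then have "x k = e" "i = 1"
      using ki(2) f_x[of k] by (auto split: if_splits)
    then have "morph_image f x j = e"
      using ki morph_image_block[OF nonerasing, of i x k] f_x[of k] by simp
    then show False using assms letters by auto
  qed
  then show thesis using ki that by simp
qed

lemma image_eq_e_imp_after_block_start:
  assumes "morph_image f x j = e"
  obtains k where "j = Suc (block_start f x k)"
proof -
  obtain k i where ki: "j = block_start f x k + i" "i < length (f (x k))"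
    using in_block[OF nonerasing] by blast
  have "i \<noteq> 0"
    using assms ki(1) image_block_start[of k] letters by (cases i) auto
  moreover have "i < 2"
    using ki(2) f_x[of k] by (simp split: if_splits)
  ultimately have "i = 1" by simp
  then show thesis using ki that by simp
qed

lemma image_after_d_e:
  assumes "morph_image f x j = d" "morph_image f x (Suc j) = e"
  shows "morph_image f x (Suc (Suc j)) = d"
proof -
  obtain k where k: "j = block_start f x k"
    using image_eq_d_imp_block_start[OF assms(1)] .
  then have "x k = e"
    using assms(2) image_after_block_start[of k] d_neq_e by (auto split: if_splits)
  then show ?thesis
    using k image_block_start[of "Suc k"] block_start_Suc_eq[of k] by simp
qed

lemma occurs_at_block_start_Cons_Cons:
  assumes "c = e \<or> c = d"
  shows "occurs_at (morph_image f x) (d # c # u) (block_start f x k) \<longleftrightarrow>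
    (if c = e then x k = e \<and> occurs_at (morph_image f x) u (block_start f x (Suc k))
     else x k = d \<and> occurs_at (morph_image f x) (c # u) (block_start f x (Suc k)))"
  using assms image_block_start[of k] image_after_block_start[of k] block_start_Suc_eq[of k]
    x_neq_e[of k] d_neq_e
  by (auto simp: occurs_at_Cons)

lemma occurs_at_block_start_iff:
  assumes "occurs_at (morph_image f x) u j" "u \<noteq> []" "hd u = d"
  shows "occurs_at (morph_image f x) u (block_start f x k) \<longleftrightarrow> occurs_at x (parse_blocks u) k"
  using assms
proof (induction u arbitrary: j k rule: parse_blocks.induct)
  case (1 c c' rest)
  let ?y = "morph_image f x"
  have c: "c = d" and occ_j: "?y j = d" "?y (Suc j) = c'" "occurs_at ?y rest (Suc (Suc j))"
    using "1.prems" by (auto simp: occurs_at_Cons)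
  have "c' \<in> {0,1}"
    using binary_image occ_j(2) by (auto simp: binary_word_def)
  then have c': "c' = e \<or> c' = d"
    using binary_letter by blast
  note step = occurs_at_block_start_Cons_Cons[OF c', of rest k]
  show ?case
  proof (cases "c' = e")
    case True
    have "rest \<noteq> [] \<Longrightarrow> hd rest = d"
      using image_after_d_e[OF occ_j(1)] occ_j(2,3) True by (cases rest) (auto simp: occurs_at_Cons)
    then have "occurs_at ?y rest (block_start f x (Suc k))
        \<longleftrightarrow> occurs_at x (parse_blocks rest) (Suc k)"
      using "1.IH"(1)[OF True occ_j(3)] by (cases "rest = []") auto
    then show ?thesis
      using step True by (simp add: c occurs_at_Cons)
  next
    case False
    then have "occurs_at ?y (c' # rest) (block_start f x (Suc k))
        \<longleftrightarrow> occurs_at x (parse_blocks (c' # rest)) (Suc k)"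
      using "1.IH"(2)[OF False, of "Suc j"] occ_j c' by (auto simp: occurs_at_Cons)
    then show ?thesis
      using step False by (simp add: c occurs_at_Cons)
  qed
next
  case "2_1"
  then show ?case by simp
next
  case ("2_2" c)
  then have "c = d" by simp
  then show ?case using image_block_start[of k] by (simp add: occurs_at_Cons)
qed

lemma occurrences_parse_blocks:
  assumes "factor u (morph_image f x)" "u \<noteq> []" "hd u = d"
  shows "occurrences (morph_image f x) u = block_start f x ` occurrences x (parse_blocks u)"
proof -
  obtain j where j: "occurs_at (morph_image f x) u j"
    using assms(1) by (auto simp: factor_def)
  note iff = occurs_at_block_start_iff[OF j assms(2,3)]
  show ?thesis
  proof (intro equalityI subsetI)
    fix i assume "i \<in> occurrences (morph_image f x) u"
    then have occ: "occurs_at (morph_image f x) u i"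
      by (simp add: occurrences_def)
    then have "morph_image f x i = d"
      using assms(2,3) by (cases u) (auto simp: occurs_at_Cons)
    then obtain k where "i = block_start f x k"
      by (rule image_eq_d_imp_block_start)
    then show "i \<in> block_start f x ` occurrences x (parse_blocks u)"
      using iff occ by (auto simp: occurrences_def)
  qed (use iff in \<open>auto simp: occurrences_def\<close>)
qed

lemma occurrences_hd_e:
  assumes "v \<noteq> []" "hd v = e"
  shows "occurrences (morph_image f x) v = Suc ` occurrences (morph_image f x) (d # v)"
proof (intro equalityI subsetI)
  fix i assume "i \<in> occurrences (morph_image f x) v"
  then have occ: "occurs_at (morph_image f x) v i"
    by (simp add: occurrences_def)
  then have "morph_image f x i = e"
    using assms by (cases v) (auto simp: occurs_at_Cons)
  then obtain k where k: "i = Suc (block_start f x k)"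
    by (rule image_eq_e_imp_after_block_start)
  then have "occurs_at (morph_image f x) (d # v) (block_start f x k)"
    using occ image_block_start[of k] by (simp add: occurs_at_Cons)
  then show "i \<in> Suc ` occurrences (morph_image f x) (d # v)"
    using k by (auto simp: occurrences_def)
qed (auto simp: occurrences_def occurs_at_Cons)

lemma derived_in_parse_blocks:
  assumes "factor u (morph_image f x)" "u \<noteq> []" "hd u = d"
    and "derived_in M x (parse_blocks u)"
  shows "derived_in M (morph_image f x) u"
proof (rule derived_in_transfer[OF occurrences_parse_blocks[OF assms(1-3)], THEN iffD2])
  show "inj (block_start f x)"
    by (rule strict_mono_imp_inj_on[OF strict_mono_block_start[OF nonerasing]])
  show "ret_seq (morph_image f x) u n = ext f (ret_seq x (parse_blocks u) n)"
    if "infinite (occurrences x (parse_blocks u))" for n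
    using ret_seq_morph_image[OF nonerasing occurrences_parse_blocks[OF assms(1-3)] that] .
  show "inj_on (ext f) (range (ret_seq x (parse_blocks u)))"
    by (rule inj_on_subset[OF inj_on_ext]) (use set_ret_seq_binary[OF binary] in auto)
qed (rule assms(4))

lemma desubstitution_hd_d:
  assumes "factor v (morph_image f x)" "v \<noteq> []" "hd v = d"
  shows "factor (parse_blocks v) x" and "length (parse_blocks v) < length v"
    and "derived_in M x (parse_blocks v) \<Longrightarrow> derived_in M (morph_image f x) v"
    and "occurs_at (morph_image f x) v 0 \<Longrightarrow> occurs_at x (parse_blocks v) 0"
proof -
  show "factor (parse_blocks v) x"
    using assms(1) occurrences_parse_blocks[OF assms] by (auto simp: factor_iff_occurrences)
  show "length (parse_blocks v) < length v"
    using length_parse_blocks[of v] assms(2) by (cases v) auto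
  show "derived_in M (morph_image f x) v" if "derived_in M x (parse_blocks v)"
    using derived_in_parse_blocks[OF assms that] .
  show "occurs_at x (parse_blocks v) 0" if "occurs_at (morph_image f x) v 0"
    using occurs_at_block_start_iff[OF that assms(2,3), of 0] that by (simp add: block_start_0)
qed

lemma desubstitution:
  assumes "factor v (morph_image f x)" "v \<noteq> []"
  obtains v' where "factor v' x" and "length v' < length v \<or> v = [e] \<and> v' = [e]"
    and "\<And>M. derived_in M x v' \<Longrightarrow> derived_in M (morph_image f x) v"
    and "occurs_at (morph_image f x) v (if hd v = d then 0 else 1)
      \<Longrightarrow> occurs_at x v' 0"
proof -
  have "hd v \<in> {0,1}"
    using assms binary_image by (cases v) (auto simp: factor_def occurs_at_Cons binary_word_def)
  then consider "hd v = d" | "hd v = e"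
    using binary_letter by blast
  then show thesis
  proof cases
    case 1
    then show thesis
      using that[of "parse_blocks v"] desubstitution_hd_d[OF assms 1] by simp
  next
    case 2
    note occ_e = occurrences_hd_e[OF assms(2) 2]
    have "factor (d # v) (morph_image f x)"
      using assms(1) occ_e by (auto simp: factor_iff_occurrences)
    note hd_d = desubstitution_hd_d[OF this list.discI list.sel(1)]
    obtain v'' where v: "v = e # v''"
      using assms(2) 2 by (cases v) auto
    have "length (parse_blocks (d # v)) < length v \<or> v = [e] \<and> parse_blocks (d # v) = [e]"
      using length_parse_blocks[of v''] v by (cases v'') auto
    moreover have "occurs_at (morph_image f x) v 1 \<Longrightarrow> occurs_at (morph_image f x) (d # v) 0"
      using image_block_start[of 0] by (simp add: occurs_at_Cons block_start_0)
    ultimately show thesis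
      using that[of "parse_blocks (d # v)"] hd_d derived_in_extend_left[OF occ_e] 2 d_neq_e
      by (metis One_nat_def)
  qed
qed

end

section \<open>Rotation classes\<close>

lemma rotate_in_Cset: "phi_word (rotate k w) \<in> Cset w"
  by (auto simp: Cset_def)

lemma rotate_add_length: "rotate (k + length w) w = rotate k w"
proof -
  have "rotate (k + length w) w = rotate ((k + length w) mod length w) w"
    by (rule rotate_conv_mod)
  also have "\<dots> = rotate (k mod length w) w"
    by simp
  also have "\<dots> = rotate k w"
    by (rule rotate_conv_mod[symmetric])
  finally show ?thesis .
qed

lemma Cset_rotate1: "Cset (rotate1 w) = Cset w"
proof (cases "w = []")
  case False
  have rot: "rotate k (rotate1 w) = rotate (Suc k) w" for k
    using rotate_rotate[of k 1 w] by simp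
  have "rotate (k + length w - 1) (rotate1 w) = rotate k w" for k
  proof -
    have "Suc (k + length w - 1) = k + length w"
      using False by simp
    then show ?thesis
      using rot[of "k + length w - 1"] rotate_add_length[of k w] by (simp only:)
  qed
  then have "phi_word (rotate k w) \<in> Cset (rotate1 w)" for k
    unfolding Cset_def by (metis (mono_tags, lifting) mem_Collect_eq)
  moreover have "phi_word (rotate k (rotate1 w)) \<in> Cset w" for k
    unfolding rot by (rule rotate_in_Cset)
  ultimately show ?thesis
    unfolding Cset_def by blast
qed simp

lemma Cset_rotate: "Cset (rotate k w) = Cset w"
  by (induction k) (simp_all add: Cset_rotate1)

lemma Cset_finite: "finite (Cset w)"
proof -
  have "phi_word (rotate k w) \<in> (\<lambda>k. phi_word (rotate k w)) ` {..<length w}" if "w \<noteq> []" for k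
    using that by (auto simp: rotate_conv_mod[of k w] intro!: imageI)
  then have "Cset w \<subseteq> (\<lambda>k. phi_word (rotate k w)) ` {..<length w}" if "w \<noteq> []"
    using that unfolding Cset_def by blast
  then show ?thesis
    by (cases "w = []") (auto simp: Cset_def intro: finite_subset)
qed

lemma derived_in_shift_drop_first:
  assumes x: "x = (\<lambda>j. y (Suc j))" and "occurs_at y v 0"
    and "infinite (occurrences y v)" "derived_coding y v z"
  shows "infinite (occurrences x v)" and "derived_coding x v (\<lambda>n. z (Suc n))"
proof -
  have occ: "occurrences y v = insert 0 (Suc ` occurrences x v)"
  proof (intro equalityI subsetI)
    fix i assume "i \<in> occurrences y v"
    then show "i \<in> insert 0 (Suc ` occurrences x v)"
      using x by (cases i) (auto simp: occurrences_def occurs_at_def)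
  qed (use assms(1,2) in \<open>auto simp: occurrences_def occurs_at_def\<close>)
  then show inf: "infinite (occurrences x v)"
    using assms(3) by auto
  show "derived_coding x v (\<lambda>n. z (Suc n))"
    using assms(4) ret_seq_shift_drop_first[OF occ inf x] by (simp add: derived_coding_def)
qed

lemma derived_in_shift_H:
  assumes "set w \<subseteq> {GA, GBe}" "GBe \<in> set w"
    and x: "x = (\<lambda>j. y (Suc j))" and "occurs_at y v 0" and derived: "derived_in (Cset w) y v"
  shows "derived_in (Cset (map H w)) x v"
proof -
  obtain k z where inf: "infinite (occurrences y v)" and z: "derived_coding y v z"
    and fixed: "bin_fixed_point (phi_word (rotate k w)) z"
    using derived by (auto simp: derived_in_def derived_fixed_by_iff Cset_def)
  have rot: "set (rotate k w) \<subseteq> {GA, GBe}" "GBe \<in> set (rotate k w)"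
    using assms(1,2) by simp_all
  have "binary_word z" "morph_image (phi_word (rotate k w)) z = z"
    using fixed by (simp_all add: bin_fixed_point_iff[OF nonerasing_phi_word])
  then have "morph_image (phi_word (map H (rotate k w))) (\<lambda>n. z (Suc n)) = (\<lambda>n. z (Suc n))"
    and "binary_word (\<lambda>n. z (Suc n))"
    using shift_fixed_point_H[OF rot(1)] fixed_point_starts_with_1[OF rot]
    by (auto simp: binary_word_def)
  then have "bin_fixed_point (phi_word (rotate k (map H w))) (\<lambda>n. z (Suc n))"
    by (simp add: bin_fixed_point_iff[OF nonerasing_phi_word] rotate_map)
  then show ?thesis
    using derived_in_shift_drop_first[OF x assms(4) inf z] rotate_in_Cset
    by (auto simp: derived_in_def derived_fixed_by_iff)
qed

definition letter_index :: "gen list \<Rightarrow> gen \<Rightarrow> nat" where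
  "letter_index w g = length (takeWhile (\<lambda>h. h \<noteq> g) w)"

text \<open>Desubstitution shortens every factor except the single letter \<open>e\<close>, which is mapped to
  itself; for that letter the measure adds the number of rotations after which the word
  begins with the letter whose desubstitution does shorten it.\<close>

definition factor_measure :: "gen list \<Rightarrow> nat list \<Rightarrow> nat" where
  "factor_measure w v = length v * (length w + 1) +
     (if v = [0] then letter_index w GA else if v = [1] then letter_index w GBe else 0)"

lemma letter_index_le: "letter_index w g \<le> length w"
  by (simp add: letter_index_def length_takeWhile_le)

lemma factor_measure_rotate1_less:
  assumes "set w \<subseteq> {GA, GBe}" "GA \<in> set w" "GBe \<in> set w" "w = g # r"
    and "length v' < length v \<or> v = [if g = GBe then 0 else 1] \<and> v' = v"
  shows "factor_measure (rotate1 w) v' < factor_measure w v"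
  using assms(5)
proof
  assume "length v' < length v"
  have "factor_measure (rotate1 w) v' \<le> length v' * (length w + 1) + length w"
    using letter_index_le[of "rotate1 w"] by (simp add: factor_measure_def)
  also have "\<dots> < (length v' + 1) * (length w + 1)"
    by simp
  also have "\<dots> \<le> length v * (length w + 1)"
    using \<open>length v' < length v\<close> by (intro mult_right_mono) auto
  also have "\<dots> \<le> factor_measure w v"
    by (simp add: factor_measure_def)
  finally show ?thesis .
next
  assume v: "v = [if g = GBe then 0 else 1] \<and> v' = v"
  show ?thesis
  proof (cases "g = GBe")
    case True
    then have "GA \<in> set r" using assms(2,4) by auto
    then show ?thesis
      using v True assms(4) by (simp add: factor_measure_def letter_index_def takeWhile_append1)
  next
    case False
    then have "g = GA" "GBe \<in> set r" using assms by auto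
    then show ?thesis
      using v assms(4) by (simp add: factor_measure_def letter_index_def takeWhile_append1)
  qed
qed

lemma fixed_point_rotate1:
  assumes "morph_image (phi_word (g # s)) x = x"
  shows "morph_image (phi g) (morph_image (phi_word s) x) = x"
    and "morph_image (phi_word (rotate1 (g # s))) (morph_image (phi_word s) x)
      = morph_image (phi_word s) x"
proof -
  show x: "morph_image (phi g) (morph_image (phi_word s) x) = x"
    using assms by (simp add: morph_image_phi_word_Cons del: phi_word.simps)
  show "morph_image (phi_word (rotate1 (g # s))) (morph_image (phi_word s) x)
      = morph_image (phi_word s) x"
    by (simp add: morph_image_phi_word_snoc x del: phi_word.simps)
qed

section \<open>Induction on the factor\<close>

lemma derived_in_Nil:
  assumes "binary_word x" "morph_image (phi_word s) x = x"
  shows "derived_in (Cset s) x []"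
proof -
  have "bin_fixed_point (phi_word s) x"
    using assms by (simp add: bin_fixed_point_iff[OF nonerasing_phi_word])
  then show ?thesis
    using derived_coding_Nil rotate_in_Cset[of 0 s]
    by (auto simp: derived_in_def derived_fixed_by_iff)
qed

lemma (in elementary_image) derived_in_image:
  assumes "factor v (morph_image f x)" "v \<noteq> []"
    and IH: "\<And>v'. factor v' x \<Longrightarrow> length v' < length v \<or> v = [e] \<and> v' = [e] \<Longrightarrow>
      derived_in M x v' \<and> (occurs_at x v' 0 \<longrightarrow> derived_in M0 x v')"
  shows "derived_in M (morph_image f x) v"
    and "occurs_at (morph_image f x) v (if hd v = d then 0 else 1)
      \<Longrightarrow> derived_in M0 (morph_image f x) v"
proof -
  obtain v' where "factor v' x" "length v' < length v \<or> v = [e] \<and> v' = [e]"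
    and "\<And>M. derived_in M x v' \<Longrightarrow> derived_in M (morph_image f x) v"
    and "occurs_at (morph_image f x) v (if hd v = d then 0 else 1)
      \<Longrightarrow> occurs_at x v' 0"
    using desubstitution[OF assms(1,2)] by blast
  then show "derived_in M (morph_image f x) v"
    and "occurs_at (morph_image f x) v (if hd v = d then 0 else 1)
      \<Longrightarrow> derived_in M0 (morph_image f x) v"
    using IH by blast+
qed

lemma (in elementary_image) derived_in_image_start:
  assumes "factor v (morph_image f x)" "v \<noteq> []"
    and IH: "\<And>v'. factor v' x \<Longrightarrow> length v' < length v \<or> v = [e] \<and> v' = [e] \<Longrightarrow>
      derived_in M x v' \<and> (occurs_at x v' 0 \<longrightarrow> derived_in M0 x v')"
  shows "derived_in M (morph_image f x) v
    \<and> (occurs_at (morph_image f x) v 0 \<longrightarrow> derived_in M0 (morph_image f x) v)"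
proof -
  have "morph_image f x 0 = d"
    using image_block_start[of 0] by (simp add: block_start_0)
  then have "occurs_at (morph_image f x) v 0 \<Longrightarrow> hd v = d"
    using assms(2) by (cases v) (auto simp: occurs_at_Cons)
  then show ?thesis
    using derived_in_image[OF assms] by auto
qed

lemma derived_in_shift_step:
  assumes "set w \<subseteq> {GA, GBe}" "GBe \<in> set w" "Cset (map H w) \<subseteq> M"
    and x: "x = (\<lambda>j. y (Suc j))" and "y 0 = 0" "x 0 = 1" "v \<noteq> []"
    and derived: "derived_in M y v"
    and derived_start: "occurs_at y v (if hd v = 0 then 0 else 1) \<Longrightarrow> derived_in (Cset w) y v"
  shows "derived_in M x v \<and> (occurs_at x v 0 \<longrightarrow> derived_in (Cset w) x v)"
proof (cases "occurs_at y v 0")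
  case True
  then have "hd v = 0"
    using \<open>y 0 = 0\<close> \<open>v \<noteq> []\<close> by (cases v) (auto simp: occurs_at_Cons)
  then have "derived_in (Cset (map H w)) x v"
    using derived_in_shift_H[OF assms(1,2) x True] derived_start True by simp
  moreover have "\<not> occurs_at x v 0"
    using \<open>x 0 = 1\<close> \<open>hd v = 0\<close> \<open>v \<noteq> []\<close> by (cases v) (auto simp: occurs_at_Cons)
  ultimately show ?thesis
    using derived_in_mono[OF assms(3)] by blast
next
  case False
  have "occurs_at x v 0 \<Longrightarrow> occurs_at y v (if hd v = 0 then 0 else 1)"
    using x \<open>x 0 = 1\<close> \<open>v \<noteq> []\<close> by (cases v) (auto simp: occurs_at_def)
  then show ?thesis
    using derived_in_shift[OF x False] derived derived_start by blast
qed

lemma derived_in_phi_GA: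
  assumes "set w \<subseteq> {GA, GBe}" "GBe \<in> set w" "Cset (map H w) \<subseteq> M"
    and binary: "binary_word x'" and x: "x = morph_image (phi GA) x'" and "x 0 = 1"
    and "factor v x" "v \<noteq> []"
    and IH: "\<And>v'. factor v' x' \<Longrightarrow> length v' < length v \<or> v = [1] \<and> v' = [1] \<Longrightarrow>
      derived_in M x' v' \<and> (occurs_at x' v' 0 \<longrightarrow> derived_in (Cset w) x' v')"
  shows "derived_in M x v \<and> (occurs_at x v 0 \<longrightarrow> derived_in (Cset w) x v)"
proof -
  let ?y = "morph_image (phi GB) x'"
  have x_shift: "x = (\<lambda>j. ?y (Suc j))" and y0: "?y 0 = 0"
    using morph_image_phi_GB[OF binary] x by simp_all
  interpret elementary_image "phi GB" 0 1 x'
    by unfold_locales (auto simp: nonerasing_phi binary)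
  have "factor v ?y"
    using assms(7) x_shift unfolding factor_def occurs_at_def by (metis add_Suc)
  note derived_y = derived_in_image[OF this assms(8) IH]
  show ?thesis
    by (rule derived_in_shift_step[OF assms(1-3) x_shift y0 assms(6,8) derived_y])
qed

lemma derived_in_phi_GB_GBe:
  assumes "g = GB \<or> g = GBe" "binary_word x'" "x = morph_image (phi g) x'" "factor v x" "v \<noteq> []"
    and IH: "\<And>v'. factor v' x' \<Longrightarrow>
      length v' < length v \<or> v = [if g = GBe then 0 else 1] \<and> v' = [if g = GBe then 0 else 1] \<Longrightarrow>
      derived_in M x' v' \<and> (occurs_at x' v' 0 \<longrightarrow> derived_in M0 x' v')"
  shows "derived_in M x v \<and> (occurs_at x v 0 \<longrightarrow> derived_in M0 x v)"
proof -
  define d where "d = (if g = GBe then 1 else 0 :: nat)"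
  define e where "e = (if g = GBe then 0 else 1 :: nat)"
  interpret elementary_image "phi g" d e x'
    using assms(1,2) by unfold_locales (auto simp: d_def e_def nonerasing_phi)
  show ?thesis
    unfolding assms(3)
    by (rule derived_in_image_start[OF assms(4)[unfolded assms(3)] assms(5)])
      (use IH in \<open>simp add: e_def\<close>)
qed

lemma derived_in_rotate1_step:
  assumes "set w \<subseteq> {GA, GBe}" "GBe \<in> set w" "w = g # r" "s \<in> {w, map H w}"
    and "binary_word x" "morph_image (phi_word s) x = x" "factor v x" "v \<noteq> []"
    and IH: "\<And>x' v'. binary_word x' \<Longrightarrow> morph_image (phi_word (rotate1 s)) x' = x' \<Longrightarrow>
      factor v' x' \<Longrightarrow> length v' < length v \<or> v = [if g = GBe then 0 else 1] \<and> v' = v \<Longrightarrow>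
      derived_in M x' v' \<and> (occurs_at x' v' 0 \<longrightarrow> derived_in (Cset s) x' v')"
    and "Cset (map H w) \<subseteq> M"
  shows "derived_in M x v \<and> (occurs_at x v 0 \<longrightarrow> derived_in (Cset s) x v)"
proof -
  define g' where "g' = (if s = w then g else H g)"
  define s' where "s' = (if s = w then r else map H r)"
  have s: "s = g' # s'"
    using assms(3,4) by (auto simp: g'_def s'_def)
  define x' where "x' = morph_image (phi_word s') x"
  have x: "x = morph_image (phi g') x'" and fixed': "morph_image (phi_word (rotate1 s)) x' = x'"
    using fixed_point_rotate1[of g' s' x] assms(6) by (simp_all add: s x'_def)
  have binary': "binary_word x'"
    unfolding x'_def by (rule binary_morph_image_phi_word[OF assms(5)])
  note IH' = IH[OF binary' fixed']
  have g: "g = GA \<or> g = GBe"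
    using assms(1,3) by auto
  show ?thesis
  proof (cases "g' = GA")
    case False
    have "g' = GB \<or> g' = GBe"
      using g False by (auto simp: g'_def)
    moreover have "(g' = GBe) = (g = GBe)"
      using g by (auto simp: g'_def)
    ultimately show ?thesis
      using derived_in_phi_GB_GBe[OF _ binary' x assms(7,8), of M "Cset s"] IH' by auto
  next
    case True
    then have "s = w" "g = GA"
      using g by (auto simp: g'_def split: if_splits)
    have "x 0 = 1"
      using fixed_point_starts_with_1[OF assms(1,2,5)] assms(6) \<open>s = w\<close> by simp
    have "derived_in M x' v' \<and> (occurs_at x' v' 0 \<longrightarrow> derived_in (Cset w) x' v')"
      if "factor v' x'" "length v' < length v \<or> v = [1] \<and> v' = [1]" for v'
      using IH' that \<open>g = GA\<close> \<open>s = w\<close> by auto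
    then show ?thesis
      using derived_in_phi_GA[OF assms(1,2,10) binary' x[unfolded True] \<open>x 0 = 1\<close> assms(7,8)]
        \<open>s = w\<close>
      by simp
  qed
qed

text \<open>The second conjunct is needed because removing the first letter of \<open>\<phi>\<^sub>b(x)\<close>
  to obtain \<open>\<phi>\<^sub>a(x)\<close> loses the first return word of factors occurring at position 0.\<close>

lemma derived_in_Cset:
  assumes "set w \<subseteq> {GA, GBe}" "GA \<in> set w" "GBe \<in> set w" "s \<in> {w, map H w}"
    and "binary_word x" "morph_image (phi_word s) x = x" "factor v x"
  shows "derived_in (Cset w \<union> Cset (map H w)) x v \<and> (occurs_at x v 0 \<longrightarrow> derived_in (Cset s) x v)"
  using assms
proof (induction "factor_measure w v" arbitrary: w s x v rule: less_induct)
  case less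
  show ?case
  proof (cases "v = []")
    case True
    then show ?thesis
      using derived_in_Nil[OF less.prems(5,6)] derived_in_mono[of "Cset s"] less.prems(4) by auto
  next
    case False
    obtain g r where w: "w = g # r"
      using less.prems(2) by (cases w) auto
    have rot: "rotate1 s \<in> {rotate1 w, map H (rotate1 w)}"
      using less.prems(4) by (auto simp: rotate1_map)
    show ?thesis
    proof (rule derived_in_rotate1_step[OF less.prems(1,3) w less.prems(4-7) False])
      fix x' v'
      assume "binary_word x'" "morph_image (phi_word (rotate1 s)) x' = x'" "factor v' x'"
        and "length v' < length v \<or> v = [if g = GBe then 0 else 1] \<and> v' = v"
      then show "derived_in (Cset w \<union> Cset (map H w)) x' v'
          \<and> (occurs_at x' v' 0 \<longrightarrow> derived_in (Cset s) x' v')"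
        using less.hyps[OF factor_measure_rotate1_less[OF less.prems(1-3) w], of v' "rotate1 s" x']
          rot less.prems(1-3)
        by (simp add: Cset_rotate1 flip: rotate1_map)
    qed simp
  qed
qed

lemma mem_ext: "c \<in> set xs \<Longrightarrow> a \<in> set (f c) \<Longrightarrow> a \<in> set (ext f xs)"
  by (induction xs) auto

lemma zero_in_phi_word:
  assumes "set s \<subseteq> {GA, GB, GBe}" "c \<in> {0,1}" "GA \<in> set s \<or> GB \<in> set s \<or> c = 0"
  shows "0 \<in> set (phi_word s c)"
  using assms
proof (induction s)
  case (Cons g s)
  show ?case
  proof (cases "g = GBe")
    case True
    then show ?thesis
      using Cons mem_ext[of 0 "phi_word s c" 0 "phi g"] by simp
  next
    case False
    then have "\<forall>a\<in>{0,1}. 0 \<in> set (phi g a)"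
      using Cons.prems(1) by auto
    then show ?thesis
      using hd_phi_word_binary[OF Cons.prems(2), of s]
        mem_ext[of "hd (phi_word s c)" "phi_word s c" 0 "phi g"] by auto
  qed
qed simp

lemma one_in_phi_word:
  assumes "set s \<subseteq> {GA, GB, GBe}" "c \<in> {0,1}" "GBe \<in> set s \<or> c = 1"
  shows "1 \<in> set (phi_word s c)"
  using assms
proof (induction s)
  case (Cons g s)
  show ?case
  proof (cases "g = GBe")
    case True
    then have "\<forall>a\<in>{0,1}. 1 \<in> set (phi g a)"
      by auto
    then show ?thesis
      using hd_phi_word_binary[OF Cons.prems(2), of s]
        mem_ext[of "hd (phi_word s c)" "phi_word s c" 1 "phi g"] by auto
  next
    case False
    then show ?thesis
      using Cons mem_ext[of 1 "phi_word s c" 1 "phi g"] by auto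
  qed
qed simp

lemma set_phi_word:
  assumes "set s \<subseteq> {GA, GB, GBe}" "GA \<in> set s \<or> GB \<in> set s" "GBe \<in> set s" "c \<in> {0,1}"
  shows "set (phi_word s c) = {0,1}"
  using zero_in_phi_word[OF assms(1,4)] one_in_phi_word[OF assms(1,4)]
    set_phi_word_binary[OF assms(4)] assms(2,3)
  by auto

lemma primitive_morphI: "\<forall>c\<in>{0,1}. set (f c) = {0,1} \<Longrightarrow> primitive_morph f"
  unfolding primitive_morph_def by (intro exI[of _ 1]) auto

lemma double_length_le_length_ext:
  "(\<And>c. c \<in> set xs \<Longrightarrow> 2 \<le> length (f c)) \<Longrightarrow> 2 * length xs \<le> length (ext f xs)"
  by (induction xs) fastforce+

lemma substitutionI:
  assumes letters: "\<forall>c\<in>{0,1}. set (f c) = {0,1}" and c0: "c0 \<in> {0,1}" "hd (f c0) = c0"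
  shows "substitution f"
proof -
  have long: "2 \<le> length (f c)" if "c \<in> {0,1}" for c
    using letters that card_length[of "f c"] by fastforce
  have grow: "set ((ext f ^^ n) [c0]) \<subseteq> {0,1} \<and> Suc n \<le> length ((ext f ^^ n) [c0])" for n
  proof (induction n)
    case (Suc n)
    let ?u = "(ext f ^^ n) [c0]"
    have "2 * length ?u \<le> length (ext f ?u)"
      using Suc long by (intro double_length_le_length_ext) blast
    moreover have "set (ext f ?u) \<subseteq> {0,1}"
      using Suc letters set_ext_binary[of ?u f] by blast
    ultimately show ?case
      using Suc by simp
  qed (use c0 in auto)
  have "f c0 \<noteq> []"
    using long[OF c0(1)] by auto
  then obtain t where t: "f c0 = c0 # t"
    using c0(2) list.collapse by metis
  moreover have "2 \<le> length (f c0)"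
    using long[OF c0(1)] .
  ultimately have "t \<noteq> []"
    by fastforce
  moreover have "filterlim (\<lambda>n. length ((ext f ^^ n) [c0])) at_top sequentially"
    unfolding filterlim_at_top
  proof
    fix Z :: nat
    show "\<forall>\<^sub>F n in sequentially. Z \<le> length ((ext f ^^ n) [c0])"
    proof (rule eventually_sequentiallyI)
      fix n assume "Z \<le> n"
      then show "Z \<le> length ((ext f ^^ n) [c0])"
        using grow[of n] by linarith
    qed
  qed
  ultimately show ?thesis
    unfolding substitution_def using c0 t by blast
qed

lemma hd_phi_word_Cons:
  assumes "c \<in> {0,1}" "g \<in> {GB, GBe}"
  shows "hd (phi_word (g # s) c) = (if g = GBe then 1 else 0)"
  using hd_phi_word_binary[OF assms(1), of s] assms(2) by (auto simp: hd_ext[OF nonerasing_phi])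

lemma primitive_substitution_phi_word:
  assumes "set w \<subseteq> {GA, GBe}" "GA \<in> set w" "GBe \<in> set w" "s \<in> {w, map H w}"
  shows "primitive_morph (phi_word s) \<and> substitution (phi_word s)"
proof -
  have "set s \<subseteq> {GA, GB, GBe}" "GA \<in> set s \<or> GB \<in> set s" "GBe \<in> set s"
    using assms by (force intro: rev_image_eqI)+
  then have letters: "\<forall>c\<in>{0,1}. set (phi_word s c) = {0,1}"
    using set_phi_word by blast
  obtain c0 where "c0 \<in> {0,1}" "hd (phi_word s c0) = c0"
  proof (cases "s = w")
    case True
    then show thesis
      using that[of 1] hd_phi_word[OF assms(1,3)] by simp
  next
    case False
    then obtain g r where "s = H g # map H r" "g \<in> {GA, GBe}"
      using assms by (cases w) auto
    then show thesis
      using that[of "if H g = GBe then 1 else 0"] hd_phi_word_Cons[of _ "H g" "map H r"] by auto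
  qed
  then show ?thesis
    using primitive_morphI[OF letters] substitutionI[OF letters] by blast
qed

lemma primitive_letters:
  assumes "set w \<subseteq> {GA, GBe}" "primitive_morph (phi_word w)"
  shows "GA \<in> set w" "GBe \<in> set w"
proof -
  obtain n where n: "\<forall>c\<in>{0,1}. \<forall>d\<in>{0,1::nat}. d \<in> set ((ext (phi_word w) ^^ n) [c])"
    using assms(2) by (auto simp: primitive_morph_def)
  have stable: "(ext (phi_word w) ^^ m) [c] = [c]" if "phi_word w c = [c]" for c m
    using that by (induction m) auto
  show "GA \<in> set w"
  proof (rule ccontr)
    assume "GA \<notin> set w"
    then have "phi_word w 1 = [1]"
      using assms(1) by (induction w) auto
    then show False
      using n stable by fastforce
  qed
  show "GBe \<in> set w"
  proof (rule ccontr)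
    assume "GBe \<notin> set w"
    then have "phi_word w 0 = [0]"
      using assms(1) by (induction w) auto
    then show False
      using n stable by fastforce
  qed
qed

lemma mem_Cset_union_H:
  assumes "\<psi> \<in> Cset w \<union> Cset (map H w)"
  obtains k s where "s \<in> {rotate k w, map H (rotate k w)}" and "\<psi> = phi_word s"
  using assms unfolding Cset_def by (auto simp: rotate_map)

lemma primitive_substitution_Cset_union_H:
  assumes "set w \<subseteq> {GA, GBe}" "GA \<in> set w" "GBe \<in> set w" "\<psi> \<in> Cset w \<union> Cset (map H w)"
  shows "primitive_morph \<psi> \<and> substitution \<psi>"
  using mem_Cset_union_H[OF assms(4)] primitive_substitution_phi_word assms(1-3)
  by (metis set_rotate)

lemma derived_fixed_by_Cset_union_H:
  assumes "set w \<subseteq> {GA, GBe}" "GA \<in> set w" "GBe \<in> set w" "\<psi> \<in> Cset w \<union> Cset (map H w)"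
    and "bin_fixed_point \<psi> u" "factor v u"
  shows "\<exists>\<psi>'\<in>Cset w \<union> Cset (map H w). derived_fixed_by u v \<psi>'"
proof -
  obtain k s where s: "s \<in> {rotate k w, map H (rotate k w)}" "\<psi> = phi_word s"
    using mem_Cset_union_H[OF assms(4)] .
  have "binary_word u" "morph_image (phi_word s) u = u"
    using assms(5) s(2) by (simp_all add: bin_fixed_point_iff[OF nonerasing_phi_word])
  then have "derived_in (Cset (rotate k w) \<union> Cset (map H (rotate k w))) u v"
    using derived_in_Cset[of "rotate k w" s] s(1) assms(1-3,6) by simp
  then show ?thesis
    by (simp add: derived_in_def Cset_rotate flip: rotate_map)
qed

theorem claim28:
  fixes w :: "gen list"
  assumes "set w \<subseteq> {GA, GBe}"
    and "primitive_morph (phi_word w)"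
  shows "closed_under_derivation (Cset w \<union> Cset (map H w))"
  using Cset_finite primitive_substitution_Cset_union_H[OF assms(1) primitive_letters[OF assms]]
    derived_fixed_by_Cset_union_H[OF assms(1) primitive_letters[OF assms]]
  by (auto simp: closed_under_derivation_def)

end
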